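(* Let $(M,d)$ be a metric space, $Q\ge2$ an integer, and let $\mathbf P\in\mathcal A_Q(M)$ not be of the form $Q[\![P]\!]$ for any $P\in M$. Then there exist an integer $1\le R<Q$, an open neighborhood $U$ of $\mathbf P$ in $\mathcal A_Q(M)$ and continuous maps $\pi_1\colon U\to\mathcal A_R(M)$, $\pi_2\colon U\to\mathcal A_{Q-R}(M)$ such that $\mathbf S=\pi_1(\mathbf S)+\pi_2(\mathbf S)$ for every $\mathbf S\in U$, and $$\mathcal G(\mathbf S,\mathbf T)^2=\mathcal G\big(\pi_1(\mathbf S),\pi_1(\mathbf T)\big)^2+\mathcal G\big(\pi_2(\mathbf S),\pi_2(\mathbf T)\big)^2\quad\text{for all }\mathbf S,\mathbf T\in U.$$
   Context: For a metric space $(M,d)$ and a positive integer $Q$, $\mathcal A_Q(M)$ is the set of measures on $M$ of the form $\sum_{i=1}^Q[\![P_i]\!]$ with $P_i\in M$ not necessarily distinct ($[\![P]\!]$ the Dirac mass at $P$), with the metric $\mathcal G\big(\sum_i[\![A_i]\!],\sum_i[\![B_i]\!]\big)=\min_\sigma\sqrt{\sum_{i=1}^Q d(A_i,B_{\sigma(i)})^2}$, minimum over all permutations $\sigma$ of $\{1,\dots,Q\}$; the same definition is used for $\mathcal A_R(M)$, $\mathcal A_{Q-R}(M)$, and sums are sums of measures. *)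

theory Defs
  imports "HOL-Analysis.Analysis" "HOL-Library.Multiset"
begin

definition AQ :: "nat \<Rightarrow> ('a::metric_space) multiset set" where
  "AQ Q = {S. size S = Q}"

text \<open>The metric G: enumerate S and T as lists (i.e. A_i and B_sigma(i)) and
  minimise the sum of squared distances over all such enumerations.\<close>
definition Gdist :: "('a::metric_space) multiset \<Rightarrow> 'a multiset \<Rightarrow> real" where
  "Gdist S T = sqrt (Min {(\<Sum>i<size S. (dist (xs ! i) (ys ! i))^2) | xs ys.
                           mset xs = S \<and> mset ys = T})"

definition G_open :: "nat \<Rightarrow> ('a::metric_space) multiset set \<Rightarrow> bool" where
  "G_open Q U \<longleftrightarrow> U \<subseteq> AQ Q \<and>
     (\<forall>S\<in>U. \<exists>e>0. \<forall>T\<in>AQ Q. Gdist S T < e \<longrightarrow> T \<in> U)"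

definition G_continuous_on :: "('a::metric_space) multiset set \<Rightarrow> ('a multiset \<Rightarrow> 'a multiset) \<Rightarrow> bool" where
  "G_continuous_on U f \<longleftrightarrow>
     (\<forall>S\<in>U. \<forall>e>0. \<exists>d>0. \<forall>T\<in>U. Gdist S T < d \<longrightarrow> Gdist (f S) (f T) < e)"

end

theory Submission
  imports Defs
begin

text \<open>
  Pick a point \<open>p\<close> of \<open>P\<close>, let \<open>c > 0\<close> be its distance to the other points of \<open>P\<close>, and let
  \<open>U\<close> consist of the \<open>S\<close> admitting an enumeration that lies pointwise within \<open>\<epsilon>\<close> of an
  enumeration of \<open>P\<close>. Split every \<open>S\<close> into its points at distance \<open>< c / 2\<close> from \<open>p\<close> and the
  rest. For \<open>S, T \<in> U\<close> we have \<open>Gdist S T \<le> 2 \<epsilon> sqrt Q\<close>, whereas a point near \<open>p\<close> and a point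
  far from \<open>p\<close> are more than \<open>c - 2 \<epsilon>\<close> apart. Once \<open>2 \<epsilon> sqrt Q \<le> c - 2 \<epsilon>\<close>, no pair of an
  optimal matching of \<open>S\<close> and \<open>T\<close> joins the two classes, so the optimal matching is the union
  of optimal matchings of the two parts; this is the Pythagoras identity, and it makes both
  projections 1-Lipschitz.
\<close>

text \<open>Couplings are the enumeration-free form of the matchings in the definition of \<open>Gdist\<close>.\<close>

definition couplings :: "'a multiset \<Rightarrow> 'b multiset \<Rightarrow> ('a \<times> 'b) multiset set" where
  "couplings S T = {M. image_mset fst M = S \<and> image_mset snd M = T}"

definition coupling_cost :: "('a::metric_space \<times> 'a) multiset \<Rightarrow> real" where
  "coupling_cost M = (\<Sum>(x, y)\<in>#M. (dist x y)\<^sup>2)"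

lemma size_eq_if_in_couplings: "M \<in> couplings S T \<Longrightarrow> size S = size T"
  unfolding couplings_def by auto

lemma mset_zip_in_couplings:
  "length xs = length ys \<Longrightarrow> mset (zip xs ys) \<in> couplings (mset xs) (mset ys)"
  unfolding couplings_def by (simp flip: mset_map)

lemma finite_couplings: "finite (couplings S T)"
proof (rule finite_subset)
  show "couplings S T \<subseteq> multisets_of_size (set_mset S \<times> set_mset T) (size S)"
    unfolding couplings_def multisets_of_size_def by force
qed auto

lemma coupling_cost_nonneg: "0 \<le> coupling_cost M"
  unfolding coupling_cost_def by (induction M) auto

lemma coupling_cost_mset_zip:
  assumes "length xs = length ys"
  shows "coupling_cost (mset (zip xs ys)) = (\<Sum>i<length xs. (dist (xs ! i) (ys ! i))\<^sup>2)"
proof -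
  have "coupling_cost (mset (zip xs ys)) = (\<Sum>(x, y)\<leftarrow>zip xs ys. (dist x y)\<^sup>2)"
    unfolding coupling_cost_def by (simp add: sum_mset_sum_list flip: mset_map)
  also have "\<dots> = (\<Sum>i<length xs. (dist (xs ! i) (ys ! i))\<^sup>2)"
    using assms by (simp add: sum_list_sum_nth atLeast0LessThan)
  finally show ?thesis .
qed

lemma Gdist_eq_Min_coupling_cost:
  assumes "size S = size T"
  shows "Gdist S T = sqrt (Min (coupling_cost ` couplings S T))"
proof -
  have "{(\<Sum>i<size S. (dist (xs ! i) (ys ! i))\<^sup>2) | xs ys. mset xs = S \<and> mset ys = T}
        = coupling_cost ` couplings S T"
  proof (intro equalityI subsetI)
    fix v assume "v \<in> {(\<Sum>i<size S. (dist (xs ! i) (ys ! i))\<^sup>2) | xs ys. mset xs = S \<and> mset ys = T}"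
    then obtain xs ys where "mset xs = S" "mset ys = T"
      and v: "v = (\<Sum>i<size S. (dist (xs ! i) (ys ! i))\<^sup>2)" by blast
    with assms have len: "length xs = length ys" "length xs = size S" by auto
    with \<open>mset xs = S\<close> \<open>mset ys = T\<close> have "mset (zip xs ys) \<in> couplings S T"
      using mset_zip_in_couplings by blast
    moreover have "v = coupling_cost (mset (zip xs ys))"
      using v len by (simp add: coupling_cost_mset_zip)
    ultimately show "v \<in> coupling_cost ` couplings S T" by blast
  next
    fix v assume "v \<in> coupling_cost ` couplings S T"
    then obtain M where M: "M \<in> couplings S T" and v: "v = coupling_cost M" by blast
    obtain zs where zs: "mset zs = M" using ex_mset by blast
    define xs ys where "xs = map fst zs" and "ys = map snd zs"
    have "mset xs = S" "mset ys = T"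
      using M zs unfolding couplings_def xs_def ys_def by auto
    have "v = coupling_cost (mset (zip xs ys))"
      unfolding v xs_def ys_def zip_map_fst_snd zs ..
    moreover have "length xs = length ys" "size S = length xs"
      using \<open>mset xs = S\<close> unfolding xs_def ys_def by auto
    ultimately have "v = (\<Sum>i<size S. (dist (xs ! i) (ys ! i))\<^sup>2)"
      by (simp add: coupling_cost_mset_zip)
    with \<open>mset xs = S\<close> \<open>mset ys = T\<close>
    show "v \<in> {(\<Sum>i<size S. (dist (xs ! i) (ys ! i))\<^sup>2) | xs ys. mset xs = S \<and> mset ys = T}"
      by blast
  qed
  then show ?thesis unfolding Gdist_def by simp
qed

lemma couplings_nonempty:
  assumes "size S = size T"
  shows "couplings S T \<noteq> {}"
proof -
  obtain xs ys where "mset xs = S" "mset ys = T" using ex_mset by metis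
  with assms show ?thesis using mset_zip_in_couplings[of xs ys] by auto
qed

lemma Gdist_sq_eq_Min_coupling_cost:
  assumes "size S = size T"
  shows "(Gdist S T)\<^sup>2 = Min (coupling_cost ` couplings S T)"
proof -
  have "0 \<le> Min (coupling_cost ` couplings S T)"
    using couplings_nonempty[OF assms] by (simp add: finite_couplings coupling_cost_nonneg)
  then show ?thesis using Gdist_eq_Min_coupling_cost[OF assms] by simp
qed

lemma Gdist_nonneg: "size S = size T \<Longrightarrow> 0 \<le> Gdist S T"
  by (simp add: Gdist_eq_Min_coupling_cost couplings_nonempty finite_couplings coupling_cost_nonneg)

lemma Gdist_sq_attained:
  assumes "size S = size T"
  shows "\<exists>M\<in>couplings S T. (Gdist S T)\<^sup>2 = coupling_cost M"
proof -
  have "Min (coupling_cost ` couplings S T) \<in> coupling_cost ` couplings S T"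
    using couplings_nonempty[OF assms] by (simp add: finite_couplings)
  then show ?thesis using Gdist_sq_eq_Min_coupling_cost[OF assms] by auto
qed

lemma Gdist_sq_le_coupling_cost:
  assumes "M \<in> couplings S T"
  shows "(Gdist S T)\<^sup>2 \<le> coupling_cost M"
  using Gdist_sq_eq_Min_coupling_cost[OF size_eq_if_in_couplings[OF assms]] assms
  by (simp add: finite_couplings Min_le)

lemma dist_sq_le_coupling_cost:
  assumes "(x, y) \<in># M"
  shows "(dist x y)\<^sup>2 \<le> coupling_cost M"
proof -
  from assms obtain N where "M = add_mset (x, y) N" by (blast dest: multi_member_split)
  then show ?thesis using coupling_cost_nonneg[of N] by (simp add: coupling_cost_def)
qed

lemma coupling_cost_union: "coupling_cost (M + N) = coupling_cost M + coupling_cost N"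
  unfolding coupling_cost_def by simp

lemma union_in_couplings:
  "M \<in> couplings S T \<Longrightarrow> N \<in> couplings S' T' \<Longrightarrow> M + N \<in> couplings (S + S') (T + T')"
  unfolding couplings_def by simp

lemma optimal_coupling_dist_le_Gdist:
  assumes "size S = size T"
  shows "\<exists>M\<in>couplings S T. (Gdist S T)\<^sup>2 = coupling_cost M \<and> (\<forall>(x, y)\<in>#M. dist x y \<le> Gdist S T)"
proof -
  obtain M where M: "M \<in> couplings S T" "(Gdist S T)\<^sup>2 = coupling_cost M"
    using Gdist_sq_attained[OF assms] by blast
  have "dist x y \<le> Gdist S T" if "(x, y) \<in># M" for x y
    using dist_sq_le_coupling_cost[OF that] M(2) Gdist_nonneg[OF assms]
    by (auto intro: power2_le_imp_le)
  with M show ?thesis by blast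
qed

lemma filter_mset_in_couplings:
  assumes "M \<in> couplings S T" and "\<forall>(x, y)\<in>#M. Pr x = Pr y"
  shows "filter_mset (\<lambda>z. Pr (fst z)) M \<in> couplings (filter_mset Pr S) (filter_mset Pr T)"
proof -
  have "filter_mset (\<lambda>z. Pr (fst z)) M = filter_mset (\<lambda>z. Pr (snd z)) M"
    by (rule filter_mset_cong[OF refl]) (use assms(2) in auto)
  then have "image_mset snd (filter_mset (\<lambda>z. Pr (fst z)) M) = filter_mset Pr T"
    using assms(1) by (simp add: couplings_def image_mset_filter_mset_swap)
  moreover have "image_mset fst (filter_mset (\<lambda>z. Pr (fst z)) M) = filter_mset Pr S"
    using assms(1) by (simp add: couplings_def image_mset_filter_mset_swap)
  ultimately show ?thesis unfolding couplings_def by simp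
qed

lemma Gdist_sq_split:
  assumes "size S = size T"
    and separated: "\<And>x y. x \<in># S \<Longrightarrow> y \<in># T \<Longrightarrow> Pr x \<noteq> Pr y \<Longrightarrow> Gdist S T < dist x y"
  shows "(Gdist S T)\<^sup>2 = (Gdist (filter_mset Pr S) (filter_mset Pr T))\<^sup>2
           + (Gdist (filter_mset (\<lambda>x. \<not> Pr x) S) (filter_mset (\<lambda>x. \<not> Pr x) T))\<^sup>2"
    (is "_ = (Gdist ?S1 ?T1)\<^sup>2 + (Gdist ?S2 ?T2)\<^sup>2")
proof -
  obtain M where M: "M \<in> couplings S T" "(Gdist S T)\<^sup>2 = coupling_cost M"
    and short: "\<forall>(x, y)\<in>#M. dist x y \<le> Gdist S T"
    using optimal_coupling_dist_le_Gdist[OF assms(1)] by blast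
  have aligned: "\<forall>(x, y)\<in>#M. Pr x = Pr y"
  proof clarify
    fix x y assume "(x, y) \<in># M"
    moreover from this have "x \<in># S" "y \<in># T"
      using M(1) unfolding couplings_def by force+
    ultimately show "Pr x = Pr y" using separated short by force
  qed
  define M1 M2 where "M1 = filter_mset (\<lambda>z. Pr (fst z)) M" and "M2 = filter_mset (\<lambda>z. \<not> Pr (fst z)) M"
  have "M1 \<in> couplings ?S1 ?T1" "M2 \<in> couplings ?S2 ?T2"
    unfolding M1_def M2_def using M(1) aligned
    by (auto intro!: filter_mset_in_couplings[where Pr = Pr] filter_mset_in_couplings[where Pr = "\<lambda>x. \<not> Pr x"])
  then have sizes: "size ?S1 = size ?T1" "size ?S2 = size ?T2"
    by (simp_all add: size_eq_if_in_couplings)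
  have "coupling_cost M = coupling_cost M1 + coupling_cost M2"
    unfolding M1_def M2_def by (simp flip: coupling_cost_union)
  moreover have "(Gdist ?S1 ?T1)\<^sup>2 \<le> coupling_cost M1" "(Gdist ?S2 ?T2)\<^sup>2 \<le> coupling_cost M2"
    using \<open>M1 \<in> _\<close> \<open>M2 \<in> _\<close> by (simp_all add: Gdist_sq_le_coupling_cost)
  ultimately have lower: "(Gdist ?S1 ?T1)\<^sup>2 + (Gdist ?S2 ?T2)\<^sup>2 \<le> (Gdist S T)\<^sup>2"
    using M(2) by linarith
  obtain N1 where N1: "N1 \<in> couplings ?S1 ?T1" "(Gdist ?S1 ?T1)\<^sup>2 = coupling_cost N1"
    using Gdist_sq_attained[OF sizes(1)] by blast
  obtain N2 where N2: "N2 \<in> couplings ?S2 ?T2" "(Gdist ?S2 ?T2)\<^sup>2 = coupling_cost N2"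
    using Gdist_sq_attained[OF sizes(2)] by blast
  have "N1 + N2 \<in> couplings S T"
    using union_in_couplings[OF N1(1) N2(1)] by (simp flip: multiset_partition)
  then have "(Gdist S T)\<^sup>2 \<le> coupling_cost (N1 + N2)"
    by (rule Gdist_sq_le_coupling_cost)
  with lower show ?thesis by (simp add: coupling_cost_union N1(2) N2(2))
qed

lemma Gdist_sq_le_if_list_all2:
  fixes \<delta> :: real
  assumes "list_all2 (\<lambda>x y. dist x y \<le> \<delta>) xs ys"
  shows "(Gdist (mset xs) (mset ys))\<^sup>2 \<le> real (length xs) * \<delta>\<^sup>2"
proof -
  have len: "length xs = length ys" using assms by (rule list_all2_lengthD)
  have "(Gdist (mset xs) (mset ys))\<^sup>2 \<le> coupling_cost (mset (zip xs ys))"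
    by (rule Gdist_sq_le_coupling_cost[OF mset_zip_in_couplings[OF len]])
  also have "\<dots> \<le> (\<Sum>_\<in>#mset (zip xs ys). \<delta>\<^sup>2)"
    unfolding coupling_cost_def
  proof (rule sum_mset_mono, clarify)
    fix x y assume "(x, y) \<in># mset (zip xs ys)"
    with assms have "dist x y \<le> \<delta>" by (auto simp: list_all2_iff)
    then show "(dist x y)\<^sup>2 \<le> \<delta>\<^sup>2" by (simp add: power_mono)
  qed
  also have "\<dots> = real (length xs) * \<delta>\<^sup>2" using len by (simp add: sum_mset_constant)
  finally show ?thesis .
qed

lemma ex_list_all2_if_Gdist_less:
  assumes "size (mset xs) = size T" "Gdist (mset xs) T < e"
  shows "\<exists>ys. mset ys = T \<and> list_all2 (\<lambda>x y. dist x y < e) xs ys"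
proof -
  obtain M where M: "M \<in> couplings (mset xs) T"
    and short: "\<forall>(x, y)\<in>#M. dist x y \<le> Gdist (mset xs) T"
    using optimal_coupling_dist_le_Gdist[OF assms(1)] by blast
  obtain zs where zs: "mset zs = M" using ex_mset by blast
  have "mset xs = mset (map fst zs)" using M zs unfolding couplings_def by simp
  then obtain ys where len: "length ys = length xs"
    and "mset (zip xs ys) = mset (zip (map fst zs) (map snd zs))"
    using ex_mset_zip_left[of "map fst zs" "map snd zs" xs] by auto
  then have zip_M: "mset (zip xs ys) = M" by (simp add: zip_map_fst_snd zs)
  have "mset ys = image_mset snd (mset (zip xs ys))"
    using len by (simp flip: mset_map)
  then have "mset ys = T" using M zip_M unfolding couplings_def by simp
  moreover have "dist x y < e" if "(x, y) \<in> set (zip xs ys)" for x y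
  proof -
    have "(x, y) \<in># M" using that zip_M by (metis set_mset_mset)
    then show ?thesis using short assms(2) by fastforce
  qed
  then have "list_all2 (\<lambda>x y. dist x y < e) xs ys"
    using len by (auto simp: list_all2_iff)
  ultimately show ?thesis by blast
qed

lemma list_all2_dist_less_slack:
  assumes "list_all2 (\<lambda>x y. dist x y < \<epsilon>) xs ys"
  shows "\<exists>r>0. list_all2 (\<lambda>x y. dist x y \<le> \<epsilon> - r) xs ys"
  using assms
proof (induction rule: list_all2_induct)
  case Nil
  show ?case by (rule exI[of _ 1]) simp
next
  case (Cons x xs y ys)
  then obtain r where r: "0 < r" "list_all2 (\<lambda>x y. dist x y \<le> \<epsilon> - r) xs ys" by blast
  define r' where "r' = min r (\<epsilon> - dist x y)"
  have "list_all2 (\<lambda>x y. dist x y \<le> \<epsilon> - r') xs ys"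
    using r(2) by (rule list_all2_mono) (simp add: r'_def)
  moreover have "0 < r'" "dist x y \<le> \<epsilon> - r'" using r(1) Cons.hyps(1) by (auto simp: r'_def)
  ultimately show ?case by auto
qed

definition mset_balls :: "'a::metric_space list \<Rightarrow> real \<Rightarrow> 'a multiset set" where
  "mset_balls ps \<epsilon> = {mset xs | xs. list_all2 (\<lambda>x p. dist x p < \<epsilon>) xs ps}"

lemma size_mset_balls: "S \<in> mset_balls ps \<epsilon> \<Longrightarrow> size S = length ps"
  unfolding mset_balls_def by (auto dest: list_all2_lengthD)

lemma mset_in_mset_balls: "0 < \<epsilon> \<Longrightarrow> mset ps \<in> mset_balls ps \<epsilon>"
  using list_all2_refl[of "\<lambda>x p. dist x p < \<epsilon>" ps] unfolding mset_balls_def by auto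

lemma G_open_mset_balls: "G_open (length ps) (mset_balls ps \<epsilon>)"
  unfolding G_open_def
proof (intro conjI ballI)
  show "mset_balls ps \<epsilon> \<subseteq> AQ (length ps)"
    using size_mset_balls unfolding AQ_def by blast
next
  fix S assume "S \<in> mset_balls ps \<epsilon>"
  then obtain xs where S: "S = mset xs" and close: "list_all2 (\<lambda>x p. dist x p < \<epsilon>) xs ps"
    unfolding mset_balls_def by blast
  obtain r where r: "0 < r" "list_all2 (\<lambda>x p. dist x p \<le> \<epsilon> - r) xs ps"
    using list_all2_dist_less_slack[OF close] by blast
  show "\<exists>e>0. \<forall>T\<in>AQ (length ps). Gdist S T < e \<longrightarrow> T \<in> mset_balls ps \<epsilon>"
  proof (intro exI[of _ r] conjI ballI impI r(1))
    fix T assume "T \<in> AQ (length ps)" "Gdist S T < r"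
    moreover have "size S = length ps" using close S by (simp add: list_all2_lengthD)
    ultimately have "size (mset xs) = size T" "Gdist (mset xs) T < r"
      unfolding AQ_def S by simp_all
    then obtain ys where ys: "mset ys = T" "list_all2 (\<lambda>x y. dist x y < r) xs ys"
      using ex_list_all2_if_Gdist_less by blast
    have "list_all2 (\<lambda>y p. dist y p < \<epsilon>) ys ps"
      unfolding list_all2_conv_all_nth
    proof (intro conjI allI impI)
      show "length ys = length ps"
        using list_all2_lengthD[OF ys(2)] list_all2_lengthD[OF r(2)] by simp
    next
      fix i assume "i < length ys"
      with ys(2) r(2) have "dist (xs ! i) (ys ! i) < r" "dist (xs ! i) (ps ! i) \<le> \<epsilon> - r"
        by (auto simp: list_all2_conv_all_nth)
      then show "dist (ys ! i) (ps ! i) < \<epsilon>"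
        using dist_triangle[of "ys ! i" "ps ! i" "xs ! i"] by (simp add: dist_commute)
    qed
    with ys(1) show "T \<in> mset_balls ps \<epsilon>" unfolding mset_balls_def by blast
  qed
qed

lemma length_filter_eq_if_list_all2:
  "list_all2 (\<lambda>x y. P x \<longleftrightarrow> Q y) xs ys \<Longrightarrow> length (filter P xs) = length (filter Q ys)"
  by (induction rule: list_all2_induct) auto

lemma list_all2_near_or_far:
  assumes "list_all2 (\<lambda>x q. dist x q < \<epsilon>) xs ps" and far: "\<forall>q\<in>set ps. q \<noteq> p \<longrightarrow> c \<le> dist p q"
  shows "list_all2 (\<lambda>x q. if q = p then dist p x < \<epsilon> else c - \<epsilon> < dist p x) xs ps"
  unfolding list_all2_iff
proof (intro conjI ballI)
  show "length xs = length ps" using assms(1) by (rule list_all2_lengthD)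
next
  fix z assume z: "z \<in> set (zip xs ps)"
  obtain x q where [simp]: "z = (x, q)" by (cases z)
  have "dist x q < \<epsilon>" using assms(1) z by (auto simp: list_all2_iff)
  moreover have "q \<noteq> p \<Longrightarrow> c \<le> dist p q" using far z by (auto dest: set_zip_rightD)
  moreover have "dist p q \<le> dist p x + dist x q" by (rule dist_triangle)
  ultimately show "case z of (x, q) \<Rightarrow> if q = p then dist p x < \<epsilon> else c - \<epsilon> < dist p x"
    by (auto simp: dist_commute)
qed

lemma mset_balls_near_or_far:
  assumes "S \<in> mset_balls ps \<epsilon>" "\<forall>q\<in>set ps. q \<noteq> p \<longrightarrow> c \<le> dist p q" "x \<in># S"
  shows "dist p x < \<epsilon> \<or> c - \<epsilon> < dist p x"
proof -
  obtain xs where "S = mset xs" and close: "list_all2 (\<lambda>x p. dist x p < \<epsilon>) xs ps"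
    using assms(1) unfolding mset_balls_def by blast
  with assms(3) obtain i where i: "i < length xs" "x = xs ! i" by (auto simp: in_set_conv_nth)
  have "if ps ! i = p then dist p x < \<epsilon> else c - \<epsilon> < dist p x"
    using list_all2_nthD[OF list_all2_near_or_far[OF close assms(2)] i(1)] i(2) by simp
  then show ?thesis by (auto split: if_splits)
qed

lemma size_filter_near_mset_balls:
  assumes "S \<in> mset_balls ps \<epsilon>" "\<forall>q\<in>set ps. q \<noteq> p \<longrightarrow> c \<le> dist p q" "2 * \<epsilon> \<le> c"
  shows "size (filter_mset (\<lambda>x. dist p x < c / 2) S) = count (mset ps) p"
    and "size (filter_mset (\<lambda>x. \<not> dist p x < c / 2) S) = length ps - count (mset ps) p"
proof -
  obtain xs where S: "S = mset xs" and close: "list_all2 (\<lambda>x p. dist x p < \<epsilon>) xs ps"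
    using assms(1) unfolding mset_balls_def by blast
  have "list_all2 (\<lambda>x q. dist p x < c / 2 \<longleftrightarrow> p = q) xs ps"
    using list_all2_near_or_far[OF close assms(2)]
    by (rule list_all2_mono) (use assms(3) in \<open>auto split: if_splits\<close>)
  then have "length (filter (\<lambda>x. dist p x < c / 2) xs) = length (filter ((=) p) ps)"
    by (rule length_filter_eq_if_list_all2)
  then show near: "size (filter_mset (\<lambda>x. dist p x < c / 2) S) = count (mset ps) p"
    by (simp add: S count_mset count_list_eq_length_filter flip: mset_filter)
  have "size S = size (filter_mset (\<lambda>x. dist p x < c / 2) S + filter_mset (\<lambda>x. \<not> dist p x < c / 2) S)"
    by (rule arg_cong[OF multiset_partition])
  then have "size S = size (filter_mset (\<lambda>x. dist p x < c / 2) S) + size (filter_mset (\<lambda>x. \<not> dist p x < c / 2) S)"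
    by (simp only: size_union)
  with near size_mset_balls[OF assms(1)]
  show "size (filter_mset (\<lambda>x. \<not> dist p x < c / 2) S) = length ps - count (mset ps) p"
    by simp
qed

lemma Gdist_sq_split_mset_balls:
  assumes S: "S \<in> mset_balls ps \<epsilon>" and T: "T \<in> mset_balls ps \<epsilon>"
    and far: "\<forall>q\<in>set ps. q \<noteq> p \<longrightarrow> c \<le> dist p q"
    and "2 * \<epsilon> \<le> c" and small: "real (length ps) * (2 * \<epsilon>)\<^sup>2 \<le> (c - 2 * \<epsilon>)\<^sup>2"
  shows "(Gdist S T)\<^sup>2 = (Gdist (filter_mset (\<lambda>x. dist p x < c / 2) S) (filter_mset (\<lambda>x. dist p x < c / 2) T))\<^sup>2
     + (Gdist (filter_mset (\<lambda>x. \<not> dist p x < c / 2) S) (filter_mset (\<lambda>x. \<not> dist p x < c / 2) T))\<^sup>2"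
proof (rule Gdist_sq_split)
  show "size S = size T" using size_mset_balls[OF S] size_mset_balls[OF T] by simp
  obtain xs ys where xs: "S = mset xs" "list_all2 (\<lambda>x p. dist x p < \<epsilon>) xs ps"
    and ys: "T = mset ys" "list_all2 (\<lambda>y p. dist y p < \<epsilon>) ys ps"
    using S T unfolding mset_balls_def by blast
  have "list_all2 (\<lambda>x y. dist x y \<le> 2 * \<epsilon>) xs ys"
    unfolding list_all2_conv_all_nth
  proof (intro conjI allI impI)
    show "length xs = length ys"
      using list_all2_lengthD[OF xs(2)] list_all2_lengthD[OF ys(2)] by simp
  next
    fix i assume "i < length xs"
    with xs(2) ys(2) have "dist (xs ! i) (ps ! i) < \<epsilon>" "dist (ys ! i) (ps ! i) < \<epsilon>"
      by (auto simp: list_all2_conv_all_nth)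
    then show "dist (xs ! i) (ys ! i) \<le> 2 * \<epsilon>"
      using dist_triangle2[of "xs ! i" "ys ! i" "ps ! i"] by simp
  qed
  then have "(Gdist S T)\<^sup>2 \<le> real (length ps) * (2 * \<epsilon>)\<^sup>2"
    using Gdist_sq_le_if_list_all2 list_all2_lengthD[OF xs(2)] xs(1) ys(1) by metis
  also have "\<dots> \<le> (c - 2 * \<epsilon>)\<^sup>2" by (rule small)
  finally have Gdist_le: "Gdist S T \<le> c - 2 * \<epsilon>"
    by (rule power2_le_imp_le) (use assms(4) in simp)
  fix x y assume "x \<in># S" "y \<in># T" and differ: "(dist p x < c / 2) \<noteq> (dist p y < c / 2)"
  have "dist p x < \<epsilon> \<or> c - \<epsilon> < dist p x" "dist p y < \<epsilon> \<or> c - \<epsilon> < dist p y"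
    using mset_balls_near_or_far[OF S far \<open>x \<in># S\<close>] mset_balls_near_or_far[OF T far \<open>y \<in># T\<close>] .
  with differ assms(4) have "c - 2 * \<epsilon> < \<bar>dist p x - dist p y\<bar>" by auto
  also have "\<dots> \<le> dist x y"
    using abs_dist_diff_le[of x p y] by (simp add: dist_commute)
  finally show "Gdist S T < dist x y" using Gdist_le by linarith
qed

lemma G_continuous_on_if_Gdist_sq_le:
  assumes "U \<subseteq> AQ Q" and "\<And>S T. S \<in> U \<Longrightarrow> T \<in> U \<Longrightarrow> (Gdist (f S) (f T))\<^sup>2 \<le> (Gdist S T)\<^sup>2"
  shows "G_continuous_on U f"
  unfolding G_continuous_on_def
proof (intro ballI allI impI)
  fix S and e :: real assume "S \<in> U" "0 < e"
  show "\<exists>d>0. \<forall>T\<in>U. Gdist S T < d \<longrightarrow> Gdist (f S) (f T) < e"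
  proof (intro exI[of _ e] conjI ballI impI \<open>0 < e\<close>)
    fix T assume "T \<in> U" "Gdist S T < e"
    moreover from \<open>S \<in> U\<close> \<open>T \<in> U\<close> have "0 \<le> Gdist S T"
      using assms(1) by (auto simp: AQ_def intro: Gdist_nonneg)
    ultimately show "Gdist (f S) (f T) < e"
      using assms(2)[OF \<open>S \<in> U\<close> \<open>T \<in> U\<close>] power2_le_imp_le by (meson le_less_trans)
  qed
qed

lemma count_less_size_if_not_replicate:
  assumes "P \<noteq> replicate_mset (size P) p"
  shows "count P p < size P"
proof -
  obtain q where q: "q \<in># P" "q \<noteq> p"
    using assms set_mset_subset_singletonD[of P p] by blast
  then have "count P p = count (P - {#q#}) p" by simp
  also have "\<dots> \<le> size (P - {#q#})" by (rule count_le_size)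
  also have "\<dots> < size P" using q(1) by (rule size_Diff1_less)
  finally show ?thesis .
qed

lemma ex_pos_le_dist_other_points:
  fixes p :: "'a::metric_space"
  assumes "finite A"
  shows "\<exists>c>0. \<forall>q\<in>A. q \<noteq> p \<longrightarrow> c \<le> dist p q"
proof (intro exI conjI ballI impI)
  let ?c = "Min (insert 1 (dist p ` (A - {p})))"
  show "0 < ?c" using assms by (subst Min_gr_iff) auto
  show "?c \<le> dist p q" if "q \<in> A" "q \<noteq> p" for q
    using assms that by (intro Min_le) auto
qed

lemma ex_radius_for_split:
  assumes "0 < c"
  shows "\<exists>\<epsilon>>0. 2 * \<epsilon> \<le> c \<and> real n * (2 * \<epsilon>)\<^sup>2 \<le> (c - 2 * \<epsilon>)\<^sup>2"
proof (intro exI conjI)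
  define \<epsilon> where "\<epsilon> = c / (2 * (real n + 2))"
  have c_eq: "c = 2 * (real n + 2) * \<epsilon>" by (simp add: \<epsilon>_def)
  show "0 < \<epsilon>" using assms by (simp add: \<epsilon>_def)
  then show "2 * \<epsilon> \<le> c" using c_eq by simp
  have "real n * (2 * \<epsilon>)\<^sup>2 \<le> (real n + 1)\<^sup>2 * (2 * \<epsilon>)\<^sup>2"
    by (intro mult_right_mono) (simp_all add: power2_eq_square algebra_simps)
  also have "\<dots> = (c - 2 * \<epsilon>)\<^sup>2" by (simp add: c_eq power2_eq_square algebra_simps)
  finally show "real n * (2 * \<epsilon>)\<^sup>2 \<le> (c - 2 * \<epsilon>)\<^sup>2" .
qed

theorem theorem3p1:
  fixes P :: "('a::metric_space) multiset" and Q :: nat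
  assumes "Q \<ge> 2" and "P \<in> AQ Q" and "\<not> (\<exists>p. P = replicate_mset Q p)"
  shows "\<exists>R U \<pi>1 \<pi>2. 1 \<le> R \<and> R < Q \<and> G_open Q U \<and> P \<in> U \<and>
     \<pi>1 ` U \<subseteq> AQ R \<and> \<pi>2 ` U \<subseteq> AQ (Q - R) \<and>
     G_continuous_on U \<pi>1 \<and> G_continuous_on U \<pi>2 \<and>
     (\<forall>S\<in>U. S = \<pi>1 S + \<pi>2 S) \<and>
     (\<forall>S\<in>U. \<forall>T\<in>U. (Gdist S T)^2 = (Gdist (\<pi>1 S) (\<pi>1 T))^2 + (Gdist (\<pi>2 S) (\<pi>2 T))^2)"
proof -
  obtain ps where ps: "mset ps = P" using ex_mset by blast
  with assms(2) have len: "length ps = Q" unfolding AQ_def by auto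
  obtain p where p: "p \<in># P" using assms(1,2) unfolding AQ_def by fastforce
  have "count P p < Q" using count_less_size_if_not_replicate[of P p] assms(2,3) by (auto simp: AQ_def)
  obtain c where "0 < c" and far: "\<forall>q\<in>set ps. q \<noteq> p \<longrightarrow> c \<le> dist p q"
    using ex_pos_le_dist_other_points[of "set ps" p] by blast
  obtain \<epsilon> where "0 < \<epsilon>" "2 * \<epsilon> \<le> c" and small: "real Q * (2 * \<epsilon>)\<^sup>2 \<le> (c - 2 * \<epsilon>)\<^sup>2"
    using ex_radius_for_split[OF \<open>0 < c\<close>] by blast
  let ?U = "mset_balls ps \<epsilon>" and ?near = "\<lambda>x. dist p x < c / 2"
  have "?U \<subseteq> AQ Q" using size_mset_balls len unfolding AQ_def by blast
  note pythagoras = Gdist_sq_split_mset_balls[OF _ _ far \<open>2 * \<epsilon> \<le> c\<close> small[folded len]]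
  note sizes = size_filter_near_mset_balls[OF _ far \<open>2 * \<epsilon> \<le> c\<close>, unfolded ps len]
  show ?thesis
  proof (rule exI[of _ "count P p"], rule exI[of _ ?U], rule exI[of _ "filter_mset ?near"],
      rule exI[of _ "filter_mset (\<lambda>x. \<not> ?near x)"], intro conjI ballI)
    show "1 \<le> count P p" using p by (simp add: Suc_le_eq)
    show "G_open Q ?U" using G_open_mset_balls[of ps \<epsilon>] by (simp add: len)
    show "P \<in> ?U" using mset_in_mset_balls[OF \<open>0 < \<epsilon>\<close>, of ps] by (simp add: ps)
    show "filter_mset ?near ` ?U \<subseteq> AQ (count P p)"
      and "filter_mset (\<lambda>x. \<not> ?near x) ` ?U \<subseteq> AQ (Q - count P p)"
      using sizes by (auto simp: AQ_def)
    show "G_continuous_on ?U (filter_mset ?near)" "G_continuous_on ?U (filter_mset (\<lambda>x. \<not> ?near x))"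
      using \<open>?U \<subseteq> AQ Q\<close> pythagoras by (auto intro!: G_continuous_on_if_Gdist_sq_le)
  qed (use \<open>count P p < Q\<close> pythagoras in \<open>simp_all add: multiset_partition\<close>)
qed

end
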